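(* Let $\mathcal{X}$ be an $n$-premaniplex and $(\mathcal{Y},\eta)$ an $(n,m)$-voltage operator. Let $\tau\in\operatorname{Aut}(\mathcal{Y})$ be such that there exists a group homomorphism $\tau_\#:\operatorname{Mon}(\mathcal{X})\to\operatorname{Mon}(\mathcal{X})$ with $\tau_\#(\overline{\eta(W)})=\overline{\eta(W\tau)}$ for every $W\in\Pi(\mathcal{Y})$, and suppose $\mathcal{X}$ is isomorphic to $\mathcal{X}_{\tau_\#}$. Then $\tau$ lifts to $\mathcal{X}\rtimes_\eta\mathcal{Y}$.
   Context: An $n$-premaniplex is an edge-coloured graph (semi-edges and parallel edges allowed) with colours $\{0,\dots,n-1\}$ such that every vertex (flag) is the start of exactly one dart of each colour, and for $|i-j|\ge2$ alternating $i,j$-paths of length 4 are closed; $x^i$ is the $i$-adjacent flag of $x$. $\mathcal{C}^n=\langle r_0,\dots,r_{n-1}\mid r_i^2,\ (r_ir_j)^2\ (|i-j|\ge2)\rangle$ acts on the left on flags by $r_ix=x^i$; the monodromy group $\operatorname{Mon}(\mathcal{X})$ is the permutation group on flags induced by this action, and $\bar\omega\in\operatorname{Mon}(\mathcal{X})$ denotes the image of $\omega\in\mathcal{C}^n$. $\mathcal{X}_{\tau_\#}$ is the edge-coloured graph with the flags of $\mathcal{X}$ in which the $i$-adjacent flag of $x$ is $\tau_\#(\bar r_i)x$. Isomorphisms are bijections on flags preserving all adjacencies; automorphisms act on the right and map paths to paths, $W\mapsto W\tau$. For a flag $y$ of an $m$-premaniplex $\mathcal{Y}$ and $\omega\in\mathcal{C}^m$,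 $W_\omega(y)$ is the homotopy class of paths from $y$ whose colour sequence $i_1,\dots,i_k$ satisfies $r_{i_k}\cdots r_{i_1}=\omega$; these form the fundamental groupoid $\Pi(\mathcal{Y})$. A voltage assignment $\eta:\Pi(\mathcal{Y})\to\mathcal{C}^n$ satisfies $\eta(W_1W_2)=\eta(W_2)\eta(W_1)$; $(\mathcal{Y},\eta)$ is an $(n,m)$-voltage operator. $\mathcal{X}\rtimes_\eta\mathcal{Y}$ has flags $\mathcal{X}\times\mathcal{Y}$ and $(x,y)^i=(\eta(W_{r_i}(y))x,r_iy)$, $i\in\{0,\dots,m-1\}$. $\tau$ lifts to $\mathcal{X}\rtimes_\eta\mathcal{Y}$ if there is $\tilde\tau\in\operatorname{Aut}(\mathcal{X}\rtimes_\eta\mathcal{Y})$ such that the $\mathcal{Y}$-coordinate of $(x,y)\tilde\tau$ is $y\tau$ for all $(x,y)$. *)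

theory Defs
  imports "HOL-Algebra.Group"
begin

text \<open>Words over colours. A list [a1,...,ak] denotes the Coxeter element
  r_a1 r_a2 ... r_ak. Its left action on flags applies r_ak first.\<close>

definition words :: "nat \<Rightarrow> nat list set" where
  "words n = {w. set w \<subseteq> {..<n}}"

definition act :: "(nat \<Rightarrow> 'a \<Rightarrow> 'a) \<Rightarrow> nat list \<Rightarrow> 'a \<Rightarrow> 'a" where
  "act adj w x = foldr (\<lambda>i z. adj i z) w x"

text \<open>Equality in the universal Coxeter group C^n, as an equivalence on words.\<close>
inductive cox_eq :: "nat \<Rightarrow> nat list \<Rightarrow> nat list \<Rightarrow> bool" for n where
  cox_refl: "cox_eq n w w"
| cox_sym: "cox_eq n u w \<Longrightarrow> cox_eq n w u"
| cox_trans: "cox_eq n u v \<Longrightarrow> cox_eq n v w \<Longrightarrow> cox_eq n u w"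
| cox_sq: "i < n \<Longrightarrow> cox_eq n (u @ [i, i] @ v) (u @ v)"
| cox_comm: "i < n \<Longrightarrow> j < n \<Longrightarrow> (i + 2 \<le> j \<or> j + 2 \<le> i) \<Longrightarrow>
      cox_eq n (u @ [i, j] @ v) (u @ [j, i] @ v)"

definition premaniplex :: "nat \<Rightarrow> 'a set \<Rightarrow> (nat \<Rightarrow> 'a \<Rightarrow> 'a) \<Rightarrow> bool" where
  "premaniplex n F adj \<longleftrightarrow>
     (\<forall>i<n. \<forall>x\<in>F. adj i x \<in> F \<and> adj i (adj i x) = x) \<and>
     (\<forall>i<n. \<forall>j<n. (i + 2 \<le> j \<or> j + 2 \<le> i) \<longrightarrow>
        (\<forall>x\<in>F. adj i (adj j (adj i (adj j x))) = x))"

definition is_iso :: "nat \<Rightarrow> 'a set \<Rightarrow> (nat \<Rightarrow> 'a \<Rightarrow> 'a) \<Rightarrow> 'b set \<Rightarrow> (nat \<Rightarrow> 'b \<Rightarrow> 'b)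
    \<Rightarrow> ('a \<Rightarrow> 'b) \<Rightarrow> bool" where
  "is_iso n F1 adj1 F2 adj2 \<phi> \<longleftrightarrow>
     bij_betw \<phi> F1 F2 \<and> (\<forall>i<n. \<forall>x\<in>F1. \<phi> (adj1 i x) = adj2 i (\<phi> x))"

definition is_aut :: "nat \<Rightarrow> 'a set \<Rightarrow> (nat \<Rightarrow> 'a \<Rightarrow> 'a) \<Rightarrow> ('a \<Rightarrow> 'a) \<Rightarrow> bool" where
  "is_aut n F adj \<tau> \<longleftrightarrow> is_iso n F adj F adj \<tau>"

definition mon_group :: "nat \<Rightarrow> 'a set \<Rightarrow> (nat \<Rightarrow> 'a \<Rightarrow> 'a) \<Rightarrow> ('a \<Rightarrow> 'a) monoid" where
  "mon_group n F adj =
     \<lparr>carrier = {restrict (act adj w) F | w. w \<in> words n},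
      mult = (\<lambda>g h. restrict (g \<circ> h) F),
      one = restrict id F\<rparr>"

definition mon_bar :: "'a set \<Rightarrow> (nat \<Rightarrow> 'a \<Rightarrow> 'a) \<Rightarrow> nat list \<Rightarrow> ('a \<Rightarrow> 'a)" where
  "mon_bar F adj w = restrict (act adj w) F"

text \<open>Since Y is a premaniplex, the homotopy class W_omega(y)
  is determined by y and omega in C^m; eta y w is a word representing
  eta(W_[w](y)) in C^n. Composition: W_[w](y) W_[v]([w]y) = W_[v@w](y).\<close>
definition voltage_operator :: "nat \<Rightarrow> nat \<Rightarrow> 'b set \<Rightarrow> (nat \<Rightarrow> 'b \<Rightarrow> 'b)
    \<Rightarrow> ('b \<Rightarrow> nat list \<Rightarrow> nat list) \<Rightarrow> bool" where
  "voltage_operator n m G adjY eta \<longleftrightarrow>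
     premaniplex m G adjY \<and>
     (\<forall>y\<in>G. \<forall>w\<in>words m. eta y w \<in> words n) \<and>
     (\<forall>y\<in>G. \<forall>w\<in>words m. \<forall>w'\<in>words m. cox_eq m w w' \<longrightarrow> cox_eq n (eta y w) (eta y w')) \<and>
     (\<forall>y\<in>G. \<forall>w\<in>words m. \<forall>v\<in>words m.
        cox_eq n (eta y (v @ w)) (eta (act adjY w y) v @ eta y w))"

definition sdp_adj :: "(nat \<Rightarrow> 'a \<Rightarrow> 'a) \<Rightarrow> (nat \<Rightarrow> 'b \<Rightarrow> 'b) \<Rightarrow> ('b \<Rightarrow> nat list \<Rightarrow> nat list)
    \<Rightarrow> nat \<Rightarrow> 'a \<times> 'b \<Rightarrow> 'a \<times> 'b" where
  "sdp_adj adjX adjY eta i p = (act adjX (eta (snd p) [i]) (fst p), adjY i (snd p))"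

definition lifts :: "nat \<Rightarrow> 'a set \<Rightarrow> (nat \<Rightarrow> 'a \<Rightarrow> 'a) \<Rightarrow> 'b set \<Rightarrow> (nat \<Rightarrow> 'b \<Rightarrow> 'b)
    \<Rightarrow> ('b \<Rightarrow> nat list \<Rightarrow> nat list) \<Rightarrow> ('b \<Rightarrow> 'b) \<Rightarrow> bool" where
  "lifts m F adjX G adjY eta \<tau> \<longleftrightarrow>
     (\<exists>\<sigma>. is_aut m (F \<times> G) (sdp_adj adjX adjY eta) \<sigma> \<and>
          (\<forall>x\<in>F. \<forall>y\<in>G. snd (\<sigma> (x, y)) = \<tau> y))"

end

theory Submission
  imports Defs
begin

text \<open>Let \<open>\<phi>\<close> be an isomorphism from \<open>\<X>\<close> to \<open>\<X>\<^sub>\<tau>\<^sub>#\<close>. Since \<open>\<tau>\<^sub>#\<close> is a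
  homomorphism of \<open>Mon(\<X>)\<close>, walking along a word \<open>\<omega>\<close> in \<open>\<X>\<^sub>\<tau>\<^sub>#\<close> applies \<open>\<tau>\<^sub>#\<close> of
  the monodromy of \<open>\<omega>\<close>, so \<open>\<phi>\<close> intertwines the monodromy of \<open>\<omega>\<close> with its image under
  \<open>\<tau>\<^sub>#\<close>. For \<open>\<omega>\<close> the voltage of an \<open>i\<close>-edge at \<open>y\<close>, compatibility of \<open>\<tau>\<^sub>#\<close> with \<open>\<eta>\<close>
  turns that image into the voltage of the \<open>i\<close>-edge at \<open>y\<tau>\<close>; hence
  \<open>(x, y) \<mapsto> (\<phi> x, y\<tau>)\<close> is an automorphism of \<open>\<X> \<rtimes>\<^sub>\<eta> \<Y>\<close>.\<close>

lemma act_Nil [simp]: "act adj [] x = x"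
  by (simp add: act_def)

lemma act_Cons [simp]: "act adj (i # w) x = adj i (act adj w x)"
  by (simp add: act_def)

lemma act_append: "act adj (u @ v) x = act adj u (act adj v x)"
  by (simp add: act_def)

lemma words_Cons_iff [simp]: "i # w \<in> words n \<longleftrightarrow> i < n \<and> w \<in> words n"
  by (auto simp: words_def)

lemma words_append_iff [simp]: "u @ v \<in> words n \<longleftrightarrow> u \<in> words n \<and> v \<in> words n"
  by (auto simp: words_def)

lemma premaniplex_adj_closed:
  "premaniplex n F adj \<Longrightarrow> i < n \<Longrightarrow> x \<in> F \<Longrightarrow> adj i x \<in> F"
  by (simp add: premaniplex_def)

lemma premaniplex_adj_adj:
  "premaniplex n F adj \<Longrightarrow> i < n \<Longrightarrow> x \<in> F \<Longrightarrow> adj i (adj i x) = x"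
  by (simp add: premaniplex_def)

lemma premaniplex_act_closed:
  assumes "premaniplex n F adj" "w \<in> words n" "x \<in> F"
  shows "act adj w x \<in> F"
  using assms(2) by (induction w) (auto simp: assms(3) intro: premaniplex_adj_closed[OF assms(1)])

lemma premaniplex_act_rev:
  assumes "premaniplex n F adj" "w \<in> words n" "x \<in> F"
  shows "act adj (rev w) (act adj w x) = x"
  using assms(2)
proof (induction w)
  case (Cons i w)
  then show ?case
    using assms by (simp add: act_append premaniplex_adj_adj premaniplex_act_closed)
qed simp

lemma mon_bar_in_carrier: "w \<in> words n \<Longrightarrow> mon_bar F adj w \<in> carrier (mon_group n F adj)"
  by (auto simp: mon_group_def mon_bar_def)

lemma mon_group_one: "\<one>\<^bsub>mon_group n F adj\<^esub> = mon_bar F adj []"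
  by (auto simp: mon_group_def mon_bar_def)

lemma mon_group_mult_apply:
  "x \<in> F \<Longrightarrow> (g \<otimes>\<^bsub>mon_group n F adj\<^esub> h) x = g (h x)"
  by (simp add: mon_group_def)

lemma mon_bar_append:
  assumes "premaniplex n F adj" "v \<in> words n"
  shows "mon_bar F adj (u @ v) = mon_bar F adj u \<otimes>\<^bsub>mon_group n F adj\<^esub> mon_bar F adj v"
  using premaniplex_act_closed[OF assms]
  by (auto simp: mon_group_def mon_bar_def act_append)

lemma premaniplex_mon_group:
  assumes X: "premaniplex n F adj"
  shows "group (mon_group n F adj)"
proof (rule groupI)
  let ?M = "mon_group n F adj"
  have carrier: "carrier ?M = mon_bar F adj ` words n"
    by (auto simp: mon_group_def mon_bar_def)
  show "\<one>\<^bsub>?M\<^esub> \<in> carrier ?M"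
    by (simp add: mon_group_one mon_bar_in_carrier words_def)
  show "g \<otimes>\<^bsub>?M\<^esub> h \<in> carrier ?M" if "g \<in> carrier ?M" "h \<in> carrier ?M" for g h
    using that X by (auto simp: carrier mon_bar_append[symmetric])
  show "g \<otimes>\<^bsub>?M\<^esub> h \<otimes>\<^bsub>?M\<^esub> k = g \<otimes>\<^bsub>?M\<^esub> (h \<otimes>\<^bsub>?M\<^esub> k)"
    if "g \<in> carrier ?M" "h \<in> carrier ?M" "k \<in> carrier ?M" for g h k
    using that X
    by (auto simp: carrier mon_bar_append[symmetric])
  show "\<one>\<^bsub>?M\<^esub> \<otimes>\<^bsub>?M\<^esub> g = g" if "g \<in> carrier ?M" for g
    using that X by (auto simp: carrier mon_group_one mon_bar_append[symmetric])
  show "\<exists>h\<in>carrier ?M. h \<otimes>\<^bsub>?M\<^esub> g = \<one>\<^bsub>?M\<^esub>" if "g \<in> carrier ?M" for g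
  proof -
    obtain w where w: "w \<in> words n" and g: "g = mon_bar F adj w"
      using \<open>g \<in> carrier ?M\<close> carrier by auto
    have "rev w \<in> words n"
      using w by (simp add: words_def)
    moreover have "mon_bar F adj (rev w) \<otimes>\<^bsub>?M\<^esub> g = \<one>\<^bsub>?M\<^esub>"
      using premaniplex_act_rev[OF X w] premaniplex_act_closed[OF X w]
      by (auto simp: g mon_group_def mon_bar_def)
    ultimately show ?thesis
      by (auto simp: carrier)
  qed
qed

lemma is_iso_act:
  assumes "premaniplex n F1 adj1" "is_iso n F1 adj1 F2 adj2 \<phi>" "w \<in> words n" "x \<in> F1"
  shows "\<phi> (act adj1 w x) = act adj2 w (\<phi> x)"
  using assms(3)
proof (induction w)
  case (Cons i w)
  then have "act adj1 w x \<in> F1"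
    using premaniplex_act_closed assms(1,4) by auto
  with Cons assms(2) show ?case
    by (simp add: is_iso_def)
qed simp

text \<open>\<open>\<lambda>i. \<tau>s (mon_bar F adj [i])\<close> is the adjacency of \<open>\<X>\<^sub>\<tau>\<^sub>#\<close>.\<close>

lemma act_twisted_mon_bar:
  assumes X: "premaniplex n F adj"
    and hom: "\<tau>s \<in> hom (mon_group n F adj) (mon_group n F adj)"
    and w: "w \<in> words n" and x: "x \<in> F"
  shows "act (\<lambda>i. \<tau>s (mon_bar F adj [i])) w x = \<tau>s (mon_bar F adj w) x"
  using w
proof (induction w)
  case Nil
  interpret group_hom "mon_group n F adj" "mon_group n F adj" \<tau>s
    using premaniplex_mon_group[OF X] hom by (simp add: group_hom_def group_hom_axioms_def)
  have "\<tau>s (mon_bar F adj []) = mon_bar F adj []"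
    using hom_one by (simp add: mon_group_one)
  with x show ?case
    by (metis act_Nil mon_bar_def restrict_apply')
next
  case (Cons i w)
  then have "[i] \<in> words n" "w \<in> words n"
    by (simp_all add: words_def)
  then have "\<tau>s (mon_bar F adj (i # w)) x = \<tau>s (mon_bar F adj [i]) (\<tau>s (mon_bar F adj w) x)"
    using mon_bar_append[OF X, of w "[i]"] hom x
    by (simp add: hom_mult mon_bar_in_carrier mon_group_mult_apply)
  with Cons show ?case
    by simp
qed

lemma lifts_map_prod:
  assumes \<phi>: "bij_betw \<phi> F F"
    and aut: "is_aut m G adjY \<tau>"
    and intertwines: "\<And>i x y. i < m \<Longrightarrow> x \<in> F \<Longrightarrow> y \<in> G \<Longrightarrow>
        \<phi> (act adjX (eta y [i]) x) = act adjX (eta (\<tau> y) [i]) (\<phi> x)"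
  shows "lifts m F adjX G adjY eta \<tau>"
  unfolding lifts_def
proof (intro exI conjI)
  show "is_aut m (F \<times> G) (sdp_adj adjX adjY eta) (map_prod \<phi> \<tau>)"
    using aut bij_betw_map_prod[OF \<phi>] intertwines
    by (auto simp: is_aut_def is_iso_def sdp_adj_def)
  show "\<forall>x\<in>F. \<forall>y\<in>G. snd (map_prod \<phi> \<tau> (x, y)) = \<tau> y"
    by simp
qed

theorem theorem6p5:
  fixes n m :: nat
    and F :: "'a set" and adjX :: "nat \<Rightarrow> 'a \<Rightarrow> 'a"
    and G :: "'b set" and adjY :: "nat \<Rightarrow> 'b \<Rightarrow> 'b"
    and eta :: "'b \<Rightarrow> nat list \<Rightarrow> nat list"
    and \<tau> :: "'b \<Rightarrow> 'b"
    and \<tau>s :: "('a \<Rightarrow> 'a) \<Rightarrow> ('a \<Rightarrow> 'a)"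
  assumes X: "premaniplex n F adjX"
    and Y: "voltage_operator n m G adjY eta"
    and aut: "is_aut m G adjY \<tau>"
    and hom: "\<tau>s \<in> hom (mon_group n F adjX) (mon_group n F adjX)"
    and compat: "\<forall>y\<in>G. \<forall>w\<in>words m.
                   \<tau>s (mon_bar F adjX (eta y w)) = mon_bar F adjX (eta (\<tau> y) w)"
    and iso: "\<exists>\<phi>. is_iso n F adjX F (\<lambda>i x. \<tau>s (mon_bar F adjX [i]) x) \<phi>"
  shows "lifts m F adjX G adjY eta \<tau>"
proof -
  obtain \<phi> where \<phi>: "is_iso n F adjX F (\<lambda>i. \<tau>s (mon_bar F adjX [i])) \<phi>"
    using iso by auto
  have \<phi>F: "\<phi> x \<in> F" if "x \<in> F" for x
    using \<phi> that by (auto simp: is_iso_def bij_betw_def)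
  show ?thesis
  proof (rule lifts_map_prod)
    show "bij_betw \<phi> F F"
      using \<phi> by (simp add: is_iso_def)
    fix i x y assume "i < m" "x \<in> F" "y \<in> G"
    moreover have "[i] \<in> words m" using \<open>i < m\<close> by (simp add: words_def)
    moreover have "eta y [i] \<in> words n"
      using Y \<open>y \<in> G\<close> calculation by (simp add: voltage_operator_def)
    ultimately show "\<phi> (act adjX (eta y [i]) x) = act adjX (eta (\<tau> y) [i]) (\<phi> x)"
      using is_iso_act[OF X \<phi>] act_twisted_mon_bar[OF X hom] compat \<phi>F
      by (simp add: mon_bar_def)
  qed (rule aut)
qed

end
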